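(* Let $n\geqslant2$. For $\kappa>0$ set $\widetilde\sigma(\kappa)=c(\kappa)/\kappa$ and $\beta=c(\kappa)^2+n\widetilde\sigma(\kappa)-1$. Then $\beta>0$ for every $\kappa>0$.
   Context: $c(\kappa)=\frac{\int_0^\pi\cos\theta\,e^{\kappa\cos\theta}\sin^{n-2}\theta\,\mathrm d\theta}{\int_0^\pi e^{\kappa\cos\theta}\sin^{n-2}\theta\,\mathrm d\theta}$. *)

theory Defs
  imports "HOL-Analysis.Analysis"
begin

definition cfun :: "nat \<Rightarrow> real \<Rightarrow> real" where
  "cfun n \<kappa> =
     integral {0..pi} (\<lambda>\<theta>. cos \<theta> * exp (\<kappa> * cos \<theta>) * sin \<theta> ^ (n - 2))
   / integral {0..pi} (\<lambda>\<theta>. exp (\<kappa> * cos \<theta>) * sin \<theta> ^ (n - 2))"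

definition sigma_tilde :: "nat \<Rightarrow> real \<Rightarrow> real" where
  "sigma_tilde n \<kappa> = cfun n \<kappa> / \<kappa>"

definition beta :: "nat \<Rightarrow> real \<Rightarrow> real" where
  "beta n \<kappa> = (cfun n \<kappa>)\<^sup>2 + real n * sigma_tilde n \<kappa> - 1"

end

theory Submission
  imports Defs
begin

text \<open>Write M_j for the integral of cos^j t * exp (\<kappa> cos t) * sin^m t over [0, pi], with m = n - 2,
  so that c(\<kappa>) = M_1 / M_0. Integrating the derivative of cos^j t * sin^(m+1) t * exp (\<kappa> cos t)
  over [0, pi] gives (m+1) M_1 = \<kappa> (M_0 - M_2) and (m+2) M_2 = M_0 + \<kappa> (M_1 - M_3); eliminating
  M_2 and M_3 yields \<kappa>^2 (M_0 M_3 - M_1 M_2) = (m+1) \<kappa> M_0^2 \<beta>. So it suffices to show the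
  correlation inequality M_1 M_2 < M_0 M_3. The reflection t \<mapsto> pi - t replaces exp (\<kappa> cos t) by its
  even part cosh in even moments and by its odd part sinh in odd ones; with respect to the weight
  cosh (\<kappa> cos t) * sin^m t the inequality then says that cos^2 t and cos t * tanh (\<kappa> cos t) are
  positively correlated, which holds because both are increasing functions of |cos t|.\<close>

lemma integral_reflect_interval_real:
  fixes f :: "real \<Rightarrow> 'a::banach"
  shows "integral {a..b} (\<lambda>x. f (a + b - x)) = integral {a..b} f"
proof -
  have "integral {a..b} (\<lambda>x. f (a + b - x)) = integral {-b..-a} (\<lambda>x. f (x + (a + b)))"
    using Henstock_Kurzweil_Integration.integral_reflect_real[of b a "\<lambda>x. f (a + b - x)"] by (simp add: add.commute)
  also have "\<dots> = integral {a..b} f"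
    using integral_shift_real_ivl[of a "a + b" b f] by simp
  finally show ?thesis .
qed

lemma integral_pos_if_continuous_nonneg:
  fixes f :: "real \<Rightarrow> real"
  assumes "continuous_on {a..b} f" "a < b" "\<And>x. x \<in> {a..b} \<Longrightarrow> 0 \<le> f x"
    and "z \<in> {a..b}" "0 < f z"
  shows "0 < integral {a..b} f"
proof -
  have "0 \<le> integral {a..b} f"
    using assms(1,3) by (intro integral_nonneg integrable_continuous_interval) auto
  moreover have "integral {a..b} f \<noteq> 0"
    using integral_eq_0_iff[OF assms(1-3)] assms(4,5) by auto
  ultimately show ?thesis by linarith
qed

lemma integral_cos_sin_power_reflect:
  "integral {0..pi} (\<lambda>x. \<phi> (cos x) * sin x ^ m) = integral {0..pi} (\<lambda>x. \<phi> (- cos x) * sin x ^ m)"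
  using integral_reflect_interval_real[of 0 pi "\<lambda>x. \<phi> (- cos x) * sin x ^ m"] by simp

lemma integral_cos_sin_power_even_part:
  assumes "continuous_on UNIV \<phi>"
  shows "integral {0..pi} (\<lambda>x. \<phi> (cos x) * sin x ^ m)
       = integral {0..pi} (\<lambda>x. (\<phi> (cos x) + \<phi> (- cos x)) / 2 * sin x ^ m)"
proof -
  have cont: "continuous_on {0..pi} (\<lambda>x. \<phi> (s * cos x) * sin x ^ m)" for s
    by (intro continuous_intros continuous_on_compose2[OF assms]) auto
  have "integral {0..pi} (\<lambda>x. (\<phi> (cos x) + \<phi> (- cos x)) / 2 * sin x ^ m)
      = (integral {0..pi} (\<lambda>x. \<phi> (cos x) * sin x ^ m) + integral {0..pi} (\<lambda>x. \<phi> (- cos x) * sin x ^ m)) / 2"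
    using cont[of 1] cont[of "-1"]
    by (simp add: add_divide_distrib distrib_right integral_add integral_divide integrable_continuous_interval)
  then show ?thesis
    using integral_cos_sin_power_reflect[of \<phi> m] by simp
qed

definition cos_moment :: "nat \<Rightarrow> real \<Rightarrow> nat \<Rightarrow> real" where
  "cos_moment m k j = integral {0..pi} (\<lambda>x. cos x ^ j * exp (k * cos x) * sin x ^ m)"

lemma cos_moment_even_part:
  "cos_moment m k j
     = integral {0..pi} (\<lambda>x. cos x ^ j * (exp (k * cos x) + (-1) ^ j * exp (- k * cos x)) / 2 * sin x ^ m)"
proof -
  have "cos_moment m k j = integral {0..pi} (\<lambda>x. (\<lambda>t. t ^ j * exp (k * t)) (cos x) * sin x ^ m)"
    by (simp add: cos_moment_def)
  also have "\<dots> = integral {0..pi} (\<lambda>x. cos x ^ j * (exp (k * cos x) + (-1) ^ j * exp (- k * cos x)) / 2 * sin x ^ m)"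
    by (subst integral_cos_sin_power_even_part)
      (auto intro!: continuous_intros simp: power_minus' algebra_simps)
  finally show ?thesis .
qed

lemma cos_moment_even:
  "even j \<Longrightarrow> cos_moment m k j = integral {0..pi} (\<lambda>x. cos x ^ j * cosh (k * cos x) * sin x ^ m)"
  unfolding cos_moment_even_part by (intro integral_cong) (simp add: cosh_def)

lemma cos_moment_odd:
  "odd j \<Longrightarrow> cos_moment m k j = integral {0..pi} (\<lambda>x. cos x ^ j * sinh (k * cos x) * sin x ^ m)"
  unfolding cos_moment_even_part by (intro integral_cong) (simp add: sinh_def)

lemma cos_moment_even_pos:
  assumes "even j"
  shows "0 < cos_moment m k j"
  unfolding cos_moment_def
proof (rule integral_pos_if_continuous_nonneg[where z = "pi / 3"])
  show "0 \<le> cos x ^ j * exp (k * cos x) * sin x ^ m" if "x \<in> {0..pi}" for x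
    using that assms by (simp add: sin_ge_zero zero_le_even_power)
qed (auto intro!: continuous_intros simp: cos_60 sin_60)

text \<open>At \<open>j = 0\<close> the junk value \<open>cos_moment m k (0 - 1)\<close> is harmless: its coefficient is \<open>0\<close>.\<close>

lemma cos_moment_recurrence:
  "real (m + j + 1) * cos_moment m k (j + 1)
     = real j * cos_moment m k (j - 1) + k * (cos_moment m k j - cos_moment m k (j + 2))"
proof -
  define g where "g i x = cos x ^ i * exp (k * cos x) * sin x ^ m" for i x
  define D where "D x = real (m + j + 1) * g (j + 1) x - real j * g (j - 1) x - k * (g j x - g (j + 2) x)"
    for x
  define F where "F x = cos x ^ j * sin x ^ (m + 1) * exp (k * cos x)" for x
  have deriv: "(F has_real_derivative D x) (at x)" for x
  proof -
    have sin2: "sin x ^ (m + 2) = (1 - cos x * cos x) * sin x ^ m"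
      using sin_squared_eq[of x] by (simp add: power_add power2_eq_square)
    have "(F has_real_derivative
        - real j * cos x ^ (j - 1) * sin x ^ (m + 2) * exp (k * cos x)
        + real (m + 1) * cos x ^ (j + 1) * sin x ^ m * exp (k * cos x)
        - k * cos x ^ j * sin x ^ (m + 2) * exp (k * cos x)) (at x)"
      unfolding F_def by ((rule derivative_eq_intros refl | simp)+) (simp add: algebra_simps)
    moreover have "- real j * cos x ^ (j - 1) * sin x ^ (m + 2) * exp (k * cos x)
        + real (m + 1) * cos x ^ (j + 1) * sin x ^ m * exp (k * cos x)
        - k * cos x ^ j * sin x ^ (m + 2) * exp (k * cos x) = D x"
      unfolding sin2 D_def g_def by (cases j) (simp_all add: algebra_simps)
    ultimately show ?thesis by simp
  qed
  have "(D has_integral F pi - F 0) {0..pi}"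
    by (intro fundamental_theorem_of_calculus)
      (auto simp flip: has_real_derivative_iff_has_vector_derivative intro: has_field_derivative_at_within deriv)
  then have "(D has_integral 0) {0..pi}"
    by (simp add: F_def)
  moreover have "(D has_integral real (m + j + 1) * cos_moment m k (j + 1) - real j * cos_moment m k (j - 1)
      - k * (cos_moment m k j - cos_moment m k (j + 2))) {0..pi}"
    unfolding D_def g_def cos_moment_def
    by (intro has_integral_diff has_integral_mult_right integrable_integral
        integrable_continuous_interval continuous_intros)
  ultimately have "real (m + j + 1) * cos_moment m k (j + 1) - real j * cos_moment m k (j - 1)
      - k * (cos_moment m k j - cos_moment m k (j + 2)) = 0"
    by (rule has_integral_unique[symmetric])
  then show ?thesis
    by linarith
qed

text \<open>Chebyshev's correlation inequality without double integrals: when \<open>c\<close> is the \<open>w\<close>-mean of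
  \<open>f\<close>, the \<open>d\<close>-terms drop out of \<open>\<integral> (f - c) (g - d) w\<close>, for any threshold \<open>d\<close>.\<close>

lemma integral_weighted_correlation_pos:
  fixes w f g :: "real \<Rightarrow> real"
  assumes cont: "continuous_on {a..b} w" "continuous_on {a..b} f" "continuous_on {a..b} g"
    and "a < b" and W: "0 < integral {a..b} w"
    and c: "c = integral {a..b} (\<lambda>x. w x * f x) / integral {a..b} w"
    and nonneg: "\<And>x. x \<in> {a..b} \<Longrightarrow> 0 \<le> (f x - c) * (g x - d) * w x"
    and "z \<in> {a..b}" "0 < (f z - c) * (g z - d) * w z"
  shows "integral {a..b} (\<lambda>x. w x * f x) * integral {a..b} (\<lambda>x. w x * g x)
       < integral {a..b} w * integral {a..b} (\<lambda>x. w x * f x * g x)"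
proof -
  define W F G H where "W = integral {a..b} w" and "F = integral {a..b} (\<lambda>x. w x * f x)"
    and "G = integral {a..b} (\<lambda>x. w x * g x)" and "H = integral {a..b} (\<lambda>x. w x * f x * g x)"
  have "((\<lambda>x. (f x - c) * (g x - d) * w x) has_integral H - d * F - c * G + c * d * W) {a..b}"
  proof -
    have "(\<lambda>x. (f x - c) * (g x - d) * w x)
        = (\<lambda>x. w x * f x * g x - d * (w x * f x) - c * (w x * g x) + c * d * w x)"
      by (auto simp: algebra_simps)
    then show ?thesis
      unfolding W_def F_def G_def H_def using cont
      by (simp only:) (intro has_integral_diff has_integral_add has_integral_mult_right
          integrable_integral integrable_continuous_interval continuous_intros)
  qed
  moreover have "0 < integral {a..b} (\<lambda>x. (f x - c) * (g x - d) * w x)"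
    using assms by (intro integral_pos_if_continuous_nonneg) (auto intro!: continuous_intros)
  ultimately have "0 < H - d * F - c * G + c * d * W"
    by (simp add: integral_unique)
  moreover have "F = c * W"
    using W by (simp add: c F_def W_def)
  ultimately have "F * G < W * H"
    using W by (simp add: W_def algebra_simps)
  then show ?thesis
    by (simp add: W_def F_def G_def H_def)
qed

lemma square_tanh_comonotone:
  fixes k s t :: real
  assumes "0 \<le> k" "0 \<le> s"
  shows "0 \<le> (t\<^sup>2 - s\<^sup>2) * (t * tanh (k * t) - s * tanh (k * s))"
proof -
  have mono: "x * tanh (k * x) \<le> y * tanh (k * y)" if "0 \<le> x" "x \<le> y" for x y
    using that assms by (intro mult_mono) (auto simp: mult_left_mono)
  define a where "a = \<bar>t\<bar>"
  have "0 \<le> a" by (simp add: a_def)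
  have "t\<^sup>2 = a\<^sup>2" "t * tanh (k * t) = a * tanh (k * a)"
    by (auto simp: a_def abs_if)
  moreover have "0 \<le> (a\<^sup>2 - s\<^sup>2) * (a * tanh (k * a) - s * tanh (k * s))"
  proof (cases "s \<le> a")
    case True
    then show ?thesis
      using mono[of s a] assms by (intro mult_nonneg_nonneg) (auto simp: power_mono)
  next
    case False
    then show ?thesis
      using mono[of a s] \<open>0 \<le> a\<close> by (intro mult_nonpos_nonpos) (auto simp: power_mono)
  qed
  ultimately show ?thesis by simp
qed

lemma cos_moment_correlation:
  assumes "0 < k"
  shows "cos_moment m k 1 * cos_moment m k 2 < cos_moment m k 0 * cos_moment m k 3"
proof -
  define w where "w = (\<lambda>x. cosh (k * cos x) * sin x ^ m)"
  define c where "c = cos_moment m k 2 / cos_moment m k 0"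
  define s where "s = sqrt c"
  define d where "d = s * tanh (k * s)"
  have M0: "cos_moment m k 0 = integral {0..pi} w"
    by (simp add: cos_moment_even w_def)
  have M1: "cos_moment m k 1 = integral {0..pi} (\<lambda>x. w x * (cos x * tanh (k * cos x)))"
    by (simp add: cos_moment_odd w_def tanh_def mult_ac)
  have M2: "cos_moment m k 2 = integral {0..pi} (\<lambda>x. w x * (cos x)\<^sup>2)"
    by (simp add: cos_moment_even w_def mult_ac)
  have M3: "cos_moment m k 3 = integral {0..pi} (\<lambda>x. w x * (cos x)\<^sup>2 * (cos x * tanh (k * cos x)))"
    by (simp add: cos_moment_odd w_def tanh_def power3_eq_cube power2_eq_square mult_ac)
  have "0 < c"
    using cos_moment_even_pos[of 0 m k] cos_moment_even_pos[of 2 m k] by (simp add: c_def)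
  then have "0 < s" "s\<^sup>2 = c" "0 < d"
    using assms by (auto simp: s_def d_def)
  have "integral {0..pi} (\<lambda>x. w x * (cos x)\<^sup>2) * integral {0..pi} (\<lambda>x. w x * (cos x * tanh (k * cos x)))
      < integral {0..pi} w * integral {0..pi} (\<lambda>x. w x * (cos x)\<^sup>2 * (cos x * tanh (k * cos x)))"
  proof (rule integral_weighted_correlation_pos[where c = c and d = d and z = "pi / 2"])
    show "0 \<le> ((cos x)\<^sup>2 - c) * (cos x * tanh (k * cos x) - d) * w x" if "x \<in> {0..pi}" for x
    proof (rule mult_nonneg_nonneg)
      show "0 \<le> w x"
        using that by (simp add: w_def sin_ge_zero)
      show "0 \<le> ((cos x)\<^sup>2 - c) * (cos x * tanh (k * cos x) - d)"
        using square_tanh_comonotone[of k s "cos x"] assms \<open>0 < s\<close> by (simp add: \<open>s\<^sup>2 = c\<close> d_def)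
    qed
    show "c = integral {0..pi} (\<lambda>x. w x * (cos x)\<^sup>2) / integral {0..pi} w"
      by (simp add: c_def M0 M2)
    show "0 < integral {0..pi} w"
      using cos_moment_even_pos[of 0 m k] by (simp add: M0)
  qed (use \<open>0 < c\<close> \<open>0 < d\<close> in \<open>auto intro!: continuous_intros simp: w_def\<close>)
  then show ?thesis
    unfolding M0 M1 M2 M3 by (simp only: mult.commute)
qed

lemma cos_moment_ratio_bound:
  assumes "0 < k"
  shows "0 < (cos_moment m k 1 / cos_moment m k 0)\<^sup>2
             + real (m + 2) * (cos_moment m k 1 / cos_moment m k 0 / k) - 1"
proof -
  define M where "M = cos_moment m k"
  have M0: "0 < M 0"
    unfolding M_def by (rule cos_moment_even_pos) simp
  have rec0: "real (m + 1) * M 1 = k * (M 0 - M 2)"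
    using cos_moment_recurrence[of m 0 k] by (simp add: M_def numeral_2_eq_2)
  have rec1: "real (m + 2) * M 2 = M 0 + k * (M 1 - M 3)"
    using cos_moment_recurrence[of m 1 k] by (simp add: M_def eval_nat_numeral add.commute)
  have "0 < k\<^sup>2 * (M 0 * M 3 - M 1 * M 2)"
    using cos_moment_correlation[OF assms] assms by (simp add: M_def)
  also have "\<dots> = real (m + 1) * (k * (M 1)\<^sup>2 + real (m + 2) * M 1 * M 0 - k * (M 0)\<^sup>2)"
  proof -
    have M2: "M 2 = M 0 - real (m + 1) * M 1 / k" and M3: "M 3 = M 1 - (real (m + 2) * M 2 - M 0) / k"
      using rec0 rec1 assms by (simp_all add: field_simps)
    show ?thesis
      unfolding M3 M2 using assms by (simp add: field_simps power2_eq_square)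
  qed
  finally have "0 < k * (M 1)\<^sup>2 + real (m + 2) * M 1 * M 0 - k * (M 0)\<^sup>2"
    by (simp add: zero_less_mult_iff)
  then show ?thesis
    using assms M0 by (simp add: M_def[symmetric] field_simps power2_eq_square)
qed

theorem lemma2:
  fixes n :: nat and \<kappa> :: real
  assumes "n \<ge> 2" and "\<kappa> > 0"
  shows "beta n \<kappa> > 0"
proof -
  obtain m where n: "n = m + 2"
    using assms(1) le_Suc_ex by (metis add.commute)
  have "cfun n \<kappa> = cos_moment m \<kappa> 1 / cos_moment m \<kappa> 0"
    by (simp add: cfun_def cos_moment_def n)
  then show ?thesis
    using cos_moment_ratio_bound[OF assms(2), of m] by (simp add: beta_def sigma_tilde_def n)
qed

end
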